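(* Let $W:\mathbb{T}\to(-\infty,\infty]$ satisfy: $W\in L^1(\mathbb{T})\cap C^2(\mathbb{T}\setminus\{0\})$ with $\int_{\mathbb{T}}W=0$; $W$ is even; and there is $C_1>0$ with $W''(x)\ge C_1$ for $x\in\mathbb{T}\setminus\{0\}$. Then $\hat W(k)>0$ for every $k\in\mathbb{Z}\setminus\{0\}$.
   Context: $\mathbb{T}=\mathbb{R}/\mathbb{Z}$; Fourier coefficients are $\hat W(k)=\int_{\mathbb{T}}W(x)e^{-2\pi ikx}\,dx$. *)

theory Defs
  imports "HOL-Analysis.Analysis"
begin

text \<open>Functions on the torus T = R/Z are modelled as 1-periodic functions real => real.
  The Fourier coefficient is the integral over one period [0,1].\<close>

definition fourier_coeff :: "(real \<Rightarrow> real) \<Rightarrow> int \<Rightarrow> complex" where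
  "fourier_coeff W k =
     integral {0..1} (\<lambda>x. complex_of_real (W x) * exp (- (2 * of_real pi * \<i> * of_int k * of_real x)))"

end

theory Submission
  imports Defs
begin

text \<open>Since \<open>W\<close> is real and symmetric about \<open>1/2\<close>, its Fourier coefficients are the cosine
  integrals \<open>\<integral>\<^sub>0\<^sup>1 W(x) cos(2\<pi>kx) dx\<close>. The function \<open>V(x) = W(x) - C\<^sub>1 x\<^sup>2/2\<close> is convex on \<open>(0,1)\<close>,
  and a convex function has nonnegative cosine integrals: after splitting \<open>[0,1]\<close> into \<open>|k|\<close> periods,
  each period folds onto a quarter period where the cosine is nonnegative and is multiplied by
  \<open>V(t) + V(1-t) - V(1/2-t) - V(1/2+t) \<ge> 0\<close>. Hence the Fourier coefficient of \<open>W\<close> is at least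
  that of \<open>C\<^sub>1 x\<^sup>2/2\<close>, which is \<open>C\<^sub>1/(4\<pi>\<^sup>2k\<^sup>2) > 0\<close>.\<close>

lemma convex_on_sum_le_sum_endpoints:
  fixes f :: "real \<Rightarrow> real"
  assumes f: "convex_on S f" and ab: "a \<in> S" "b \<in> S"
    and "a \<le> x" "a \<le> y" "x + y = a + b"
  shows "f x + f y \<le> f a + f b"
proof (cases "a = b")
  case True
  with assms have "x = a" "y = a" by linarith+
  then show ?thesis using True by simp
next
  case False
  then have "a < b" using assms by linarith
  define t where "t = (x - a) / (b - a)"
  have t: "0 \<le> t" "t \<le> 1" unfolding t_def using assms \<open>a < b\<close> by auto
  have "t * (b - a) = x - a" unfolding t_def using \<open>a < b\<close> by simp
  then have "x = (1 - t) *\<^sub>R a + t *\<^sub>R b" "y = (1 - (1 - t)) *\<^sub>R a + (1 - t) *\<^sub>R b"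
    using \<open>x + y = a + b\<close> by (simp_all add: algebra_simps)
  then have "f x \<le> (1 - t) * f a + t * f b" "f y \<le> t * f a + (1 - t) * f b"
    using convex_onD[OF f, of t a b] convex_onD[OF f, of "1 - t" a b] t ab by simp_all
  then show ?thesis by (simp add: algebra_simps)
qed

lemma convex_on_compose_affine:
  fixes f :: "real \<Rightarrow> real"
  assumes f: "convex_on S f" and "convex T" and maps: "\<And>x. x \<in> T \<Longrightarrow> m * x + c \<in> S"
  shows "convex_on T (\<lambda>x. f (m * x + c))"
proof (rule convex_onI)
  fix t x y :: real assume "0 < t" "t < 1" "x \<in> T" "y \<in> T"
  moreover have "m * ((1 - t) *\<^sub>R x + t *\<^sub>R y) + c = (1 - t) *\<^sub>R (m * x + c) + t *\<^sub>R (m * y + c)"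
    by (simp add: algebra_simps)
  ultimately show "f (m * ((1 - t) *\<^sub>R x + t *\<^sub>R y) + c) \<le> (1 - t) * f (m * x + c) + t * f (m * y + c)"
    using convex_onD[OF f] maps by simp
qed fact

lemma convex_on_diff_half_square:
  fixes f f' f'' :: "real \<Rightarrow> real"
  assumes "convex S"
    and "\<And>x. x \<in> S \<Longrightarrow> (f has_real_derivative f' x) (at x)"
    and "\<And>x. x \<in> S \<Longrightarrow> (f' has_real_derivative f'' x) (at x)"
    and "\<And>x. x \<in> S \<Longrightarrow> c \<le> f'' x"
  shows "convex_on S (\<lambda>x. f x - c / 2 * x\<^sup>2)"
  using assms
  by (intro f''_ge0_imp_convex[where f' = "\<lambda>x. f' x - c * x" and f'' = "\<lambda>x. f'' x - c"])
     (auto intro!: derivative_eq_intros simp: power2_eq_square)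

lemma has_integral_affinity_real:
  fixes f :: "real \<Rightarrow> real"
  assumes "(f has_integral i) {a..b}" "m > 0"
  shows "((\<lambda>x. f (m * x + c)) has_integral i / m) {(a - c) / m..(b - c) / m}"
  using has_integral_affinity'[of f i a b m c] assms by (simp add: divide_simps)

lemma has_integral_reflect_shift_real:
  fixes f :: "real \<Rightarrow> real"
  assumes "(f has_integral i) {a..b}"
  shows "((\<lambda>x. f (c - x)) has_integral i) {c - b..c - a}"
proof -
  have "((\<lambda>x. f (x + c)) has_integral i) {a - c..b - c}"
    using has_integral_affinity_real[OF assms, of 1 c] by simp
  then have "((\<lambda>x. f (- x + c)) has_integral i) {- (b - c)..- (a - c)}"
    using has_integral_reflect_real[of "\<lambda>x. f (x + c)"] by blast
  then show ?thesis by simp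
qed

lemma has_integral_fold_quarters:
  fixes h :: "real \<Rightarrow> real"
  assumes "h integrable_on {0..1}"
  shows "((\<lambda>t. h t + h (1/2 - t) + h (t + 1/2) + h (1 - t)) has_integral integral {0..1} h) {0..1/4}"
proof -
  have part: "(h has_integral integral {a..b} h) {a..b}" if "0 \<le> a" "b \<le> 1" for a b
    using integrable_subinterval_real[OF assms, of a b] that by (simp add: integrable_integral)
  have combine: "integral {a..b} h + integral {b..c} h = integral {a..c} h"
    if "0 \<le> a" "a \<le> b" "b \<le> c" "c \<le> 1" for a b c
    using Henstock_Kurzweil_Integration.integral_combine[of a b c h]
      integrable_subinterval_real[OF assms, of a c] that by simp
  have "((\<lambda>t. h t + h (1/2 - t) + h (t + 1/2) + h (1 - t)) has_integral
      integral {0..1/4} h + integral {1/4..1/2} h + integral {1/2..3/4} h + integral {3/4..1} h)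
      {0..1/4}"
    using part[of 0 "1/4"] has_integral_reflect_shift_real[OF part[of "1/4" "1/2"], of "1/2"]
      has_integral_affinity_real[OF part[of "1/2" "3/4"], of 1 "1/2"]
      has_integral_reflect_shift_real[OF part[of "3/4" 1], of 1]
    by (intro has_integral_add) simp_all
  moreover have "integral {0..1/4} h + integral {1/4..1/2} h + integral {1/2..3/4} h
      + integral {3/4..1} h = integral {0..1} h"
    using combine[of 0 "1/4" "1/2"] combine[of "1/2" "3/4" 1] combine[of 0 "1/2" 1] by simp
  ultimately show ?thesis by simp
qed

lemma convex_on_cos_integral_nonneg_unit:
  fixes g :: "real \<Rightarrow> real"
  assumes g: "convex_on {0<..<1} g"
  shows "0 \<le> integral {0..1} (\<lambda>s. g s * cos (2 * pi * s))"
proof (cases "(\<lambda>s. g s * cos (2 * pi * s)) integrable_on {0..1}")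
  case False
  then show ?thesis by (simp add: not_integrable_integral)
next
  case True
  have fold_nonneg: "0 \<le> g t * cos (2 * pi * t) + g (1/2 - t) * cos (2 * pi * (1/2 - t))
      + g (t + 1/2) * cos (2 * pi * (t + 1/2)) + g (1 - t) * cos (2 * pi * (1 - t))"
    if "0 < t" "t < 1/4" for t
  proof -
    have "0 \<le> 2 * pi * t" "2 * pi * t \<le> pi / 2"
      using that pi_gt_zero by simp_all
    then have "0 \<le> cos (2 * pi * t)"
      using pi_gt_zero by (intro cos_ge_zero) linarith+
    moreover have "g (1/2 - t) + g (t + 1/2) \<le> g t + g (1 - t)"
      using that by (intro convex_on_sum_le_sum_endpoints[OF g]) auto
    ultimately have "0 \<le> cos (2 * pi * t) * (g t + g (1 - t) - g (1/2 - t) - g (t + 1/2))"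
      by simp
    moreover have "cos (2 * pi * (1/2 - t)) = - cos (2 * pi * t)"
      "cos (2 * pi * (t + 1/2)) = - cos (2 * pi * t)" "cos (2 * pi * (1 - t)) = cos (2 * pi * t)"
      by (simp_all add: algebra_simps cos_diff cos_add)
    ultimately show ?thesis by (simp add: algebra_simps)
  qed
  from has_integral_fold_quarters[OF True] show ?thesis
    by (subst (asm) has_integral_Icc_iff_Ioo) (rule has_integral_nonneg, use fold_nonneg in auto)
qed

lemma integral_unit_interval_eq_sum_rescaled:
  fixes f :: "real \<Rightarrow> real" and n :: nat
  assumes n: "n > 0" and f: "f integrable_on {0..1}"
  shows "integral {0..1} f = (\<Sum>j<n. integral {0..1} (\<lambda>s. f ((s + j) / n))) / n"
proof -
  have sub: "f integrable_on {a..b}" if "0 \<le> a" "b \<le> 1" for a b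
    using integrable_subinterval_real[OF f] that by simp
  have split: "integral {0..m / n} f = (\<Sum>j<m. integral {real j / n..real (j + 1) / n} f)" if "m \<le> n" for m
    using that
  proof (induction m)
    case (Suc m)
    then have "real (Suc m) / n \<le> 1" using n by (simp add: divide_simps)
    then have "integral {0..m / n} f + integral {m / n..(m + 1) / n} f = integral {0..(m + 1) / n} f"
      using Henstock_Kurzweil_Integration.integral_combine[of 0 "m / n" "(m + 1) / n" f]
        sub[of 0 "(m + 1) / n"] n by (simp add: divide_simps)
    with Suc show ?case by simp
  qed simp
  have piece: "integral {0..1} (\<lambda>s. f ((s + j) / n)) = n * integral {j / n..real (j + 1) / n} f"
    if "j < n" for j
  proof -
    have "real (j + 1) / n \<le> 1" using that by (simp add: divide_simps)
    then have "(f has_integral integral {j / n..real (j + 1) / n} f) {j / n..real (j + 1) / n}"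
      using sub[of "j / n" "(j + 1) / n"] by (simp add: integrable_integral)
    from has_integral_affinity_real[OF this, of "1 / n" "j / n"]
    have "((\<lambda>s. f (1 / n * s + j / n)) has_integral n * integral {j / n..real (j + 1) / n} f)
        {(j / n - j / n) / (1 / n)..(real (j + 1) / n - j / n) / (1 / n)}"
      using n by (simp add: mult.commute)
    moreover have "(real (j + 1) / n - j / n) / (1 / n) = 1" "1 / n * s + j / n = (s + j) / n" for s :: real
      using n by (simp_all add: divide_simps)
    ultimately show ?thesis by (simp add: integral_unique)
  qed
  have "(\<Sum>j<n. integral {0..1} (\<lambda>s. f ((s + j) / n)))
      = n * (\<Sum>j<n. integral {real j / n..real (j + 1) / n} f)"
    using piece by (simp add: sum_distrib_left)
  with split[of n] n show ?thesis by simp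
qed

lemma convex_on_cos_integral_nonneg:
  fixes V :: "real \<Rightarrow> real" and n :: nat
  assumes V: "convex_on {0<..<1} V" and n: "n > 0"
  shows "0 \<le> integral {0..1} (\<lambda>x. V x * cos (2 * pi * n * x))"
proof (cases "(\<lambda>x. V x * cos (2 * pi * n * x)) integrable_on {0..1}")
  case False
  then show ?thesis by (simp add: not_integrable_integral)
next
  case True
  have "0 \<le> integral {0..1} (\<lambda>s. V ((s + j) / n) * cos (2 * pi * n * ((s + j) / n)))"
    if "j < n" for j
  proof -
    have "1 / n * s + j / n \<in> {0<..<1}" if "s \<in> {0<..<1}" for s
    proof -
      have "1 / n * s + j / n = (s + j) / n" by (simp add: add_divide_distrib)
      then show ?thesis using that \<open>j < n\<close> by (auto simp: divide_simps)
    qed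
    then have "convex_on {0<..<1} (\<lambda>s. V (1 / n * s + j / n))"
      by (intro convex_on_compose_affine[OF V]) auto
    then have "0 \<le> integral {0..1} (\<lambda>s. V ((s + j) / n) * cos (2 * pi * s))"
      using convex_on_cos_integral_nonneg_unit by (simp add: add_divide_distrib)
    moreover have "cos (2 * pi * n * ((s + j) / n)) = cos (2 * pi * s)" for s :: real
    proof -
      have "2 * pi * n * ((s + j) / n) = 2 * pi * s + 2 * pi * of_int (int j)"
        using n by (simp add: field_simps)
      then show ?thesis by (simp only: cos_add cos_int_2pin sin_int_2pin)
    qed
    ultimately show ?thesis by simp
  qed
  then show ?thesis
    by (subst integral_unit_interval_eq_sum_rescaled[OF n True]) (auto intro!: divide_nonneg_nonneg sum_nonneg)
qed

lemma convex_on_cos_integral_nonneg_int: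
  fixes V :: "real \<Rightarrow> real" and k :: int
  assumes "convex_on {0<..<1} V" and "k \<noteq> 0"
  shows "0 \<le> integral {0..1} (\<lambda>x. V x * cos (2 * pi * k * x))"
proof -
  have "cos (2 * pi * k * x) = cos (2 * pi * nat \<bar>k\<bar> * x)" for x
  proof (cases "0 \<le> k")
    case False
    then have "2 * pi * nat \<bar>k\<bar> * x = - (2 * pi * k * x)" by simp
    then show ?thesis by (metis cos_minus)
  qed simp
  then show ?thesis
    using convex_on_cos_integral_nonneg[OF assms(1), of "nat \<bar>k\<bar>"] assms(2) by simp
qed

lemma has_integral_square_cos:
  fixes k :: int
  assumes "k \<noteq> 0"
  shows "((\<lambda>x. x\<^sup>2 * cos (2 * pi * k * x)) has_integral 1 / (2 * pi\<^sup>2 * k\<^sup>2)) {0..1}"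
proof -
  define a where "a = 2 * pi * k"
  have "a \<noteq> 0" using assms unfolding a_def by simp
  define F where "F x = x\<^sup>2 * sin (a * x) / a + 2 * x * cos (a * x) / a\<^sup>2 - 2 * sin (a * x) / a ^ 3" for x
  have "(F has_real_derivative x\<^sup>2 * cos (a * x)) (at x within {0..1})" for x
    unfolding F_def using \<open>a \<noteq> 0\<close>
    by (auto intro!: derivative_eq_intros simp: field_simps power2_eq_square power3_eq_cube)
  then have "((\<lambda>x. x\<^sup>2 * cos (a * x)) has_integral F 1 - F 0) {0..1}"
    by (intro fundamental_theorem_of_calculus)
       (auto simp: has_real_derivative_iff_has_vector_derivative[symmetric])
  moreover have "sin a = 0" "cos a = 1"
    unfolding a_def by simp_all
  then have "F 1 - F 0 = 2 / a\<^sup>2"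
    unfolding F_def by simp
  moreover have "2 / a\<^sup>2 = 1 / (2 * pi\<^sup>2 * k\<^sup>2)"
    unfolding a_def by (simp add: power_mult_distrib)
  ultimately show ?thesis unfolding a_def by (simp add: mult.assoc)
qed

lemma integrable_mult_continuous:
  fixes f g :: "real \<Rightarrow> real"
  assumes "f absolutely_integrable_on {a..b}" and "continuous_on {a..b} g"
  shows "(\<lambda>x. f x * g x) integrable_on {a..b}"
proof -
  have "g \<in> borel_measurable (lebesgue_on {a..b})"
    by (rule continuous_imp_measurable_on_sets_lebesgue) (use assms(2) in auto)
  moreover have "bounded (g ` {a..b})"
    by (rule compact_imp_bounded compact_continuous_image assms(2) compact_Icc)+
  ultimately have "(\<lambda>x. g x * f x) absolutely_integrable_on {a..b}"
    by (intro absolutely_integrable_bounded_measurable_product_real assms(1)) auto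
  then show ?thesis by (simp add: absolutely_integrable_on_def mult.commute)
qed

lemma cos_integral_diff_half_square:
  fixes W :: "real \<Rightarrow> real" and k :: int
  assumes "W absolutely_integrable_on {0..1}" and "k \<noteq> 0"
  shows "integral {0..1} (\<lambda>x. (W x - C / 2 * x\<^sup>2) * cos (2 * pi * k * x))
    = integral {0..1} (\<lambda>x. W x * cos (2 * pi * k * x)) - C / (4 * pi\<^sup>2 * k\<^sup>2)"
proof (rule integral_unique)
  have "((\<lambda>x. W x * cos (2 * pi * k * x)) has_integral
      integral {0..1} (\<lambda>x. W x * cos (2 * pi * k * x))) {0..1}"
    using assms(1) by (auto intro!: integrable_integral integrable_mult_continuous continuous_intros)
  moreover note has_integral_mult_right[OF has_integral_square_cos[OF assms(2)], where c = "C / 2"]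
  ultimately have "((\<lambda>x. W x * cos (2 * pi * k * x) - C / 2 * (x\<^sup>2 * cos (2 * pi * k * x)))
      has_integral integral {0..1} (\<lambda>x. W x * cos (2 * pi * k * x)) - C / 2 * (1 / (2 * pi\<^sup>2 * k\<^sup>2)))
      {0..1}"
    by (rule has_integral_diff)
  then show "((\<lambda>x. (W x - C / 2 * x\<^sup>2) * cos (2 * pi * k * x)) has_integral
      integral {0..1} (\<lambda>x. W x * cos (2 * pi * k * x)) - C / (4 * pi\<^sup>2 * k\<^sup>2)) {0..1}"
    by (simp add: algebra_simps)
qed

lemma fourier_coeff_eq_cos_sin:
  fixes W :: "real \<Rightarrow> real"
  assumes "W absolutely_integrable_on {0..1}"
  shows "fourier_coeff W k = of_real (integral {0..1} (\<lambda>x. W x * cos (2 * pi * k * x)))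
      - \<i> * of_real (integral {0..1} (\<lambda>x. W x * sin (2 * pi * k * x)))"
proof -
  have "complex_of_real (W x) * exp (- (2 * of_real pi * \<i> * of_int k * of_real x))
     = of_real (W x * cos (2 * pi * k * x)) - \<i> * of_real (W x * sin (2 * pi * k * x))" for x
  proof -
    have "exp (- (2 * of_real pi * \<i> * of_int k * of_real x)) = cis (- (2 * pi * k * x))"
      by (simp add: cis_conv_exp algebra_simps)
    then show ?thesis by (simp add: complex_eq_iff)
  qed
  moreover have "((\<lambda>x. W x * cos (2 * pi * k * x)) has_integral
      integral {0..1} (\<lambda>x. W x * cos (2 * pi * k * x))) {0..1}"
    "((\<lambda>x. W x * sin (2 * pi * k * x)) has_integral
      integral {0..1} (\<lambda>x. W x * sin (2 * pi * k * x))) {0..1}"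
    using assms by (auto intro!: integrable_integral integrable_mult_continuous continuous_intros)
  ultimately have "((\<lambda>x. complex_of_real (W x) * exp (- (2 * of_real pi * \<i> * of_int k * of_real x)))
      has_integral of_real (integral {0..1} (\<lambda>x. W x * cos (2 * pi * k * x)))
        - \<i> * of_real (integral {0..1} (\<lambda>x. W x * sin (2 * pi * k * x)))) {0..1}"
    by (simp only:) (intro has_integral_diff has_integral_mult_right has_integral_of_real)
  then show ?thesis
    unfolding fourier_coeff_def by (rule integral_unique)
qed

lemma sin_integral_eq_0_if_symmetric:
  fixes W :: "real \<Rightarrow> real" and k :: int
  assumes symm: "\<And>x. W (1 - x) = W x"
  shows "integral {0..1} (\<lambda>x. W x * sin (2 * pi * k * x)) = 0"
proof (cases "(\<lambda>x. W x * sin (2 * pi * k * x)) integrable_on {0..1}")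
  case False
  then show ?thesis by (simp add: not_integrable_integral)
next
  case True
  define I where "I = integral {0..1} (\<lambda>x. W x * sin (2 * pi * k * x))"
  have I: "((\<lambda>x. W x * sin (2 * pi * k * x)) has_integral I) {0..1}"
    using True unfolding I_def by (simp add: integrable_integral)
  have "sin (2 * pi * k * (1 - x)) = - sin (2 * pi * k * x)" for x
    by (simp add: right_diff_distrib sin_diff)
  then have "W (1 - x) * sin (2 * pi * k * (1 - x)) = - (W x * sin (2 * pi * k * x))" for x
    using symm[of x] by simp
  then have "((\<lambda>x. - (W x * sin (2 * pi * k * x))) has_integral I) {0..1}"
    using has_integral_reflect_shift_real[OF I, of 1] by simp
  with has_integral_neg[OF I] have "I = - I"
    using has_integral_unique by blast
  then show ?thesis unfolding I_def by simp
qed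

theorem lemma3p7:
  fixes W W' W'' :: "real \<Rightarrow> real" and C1 :: real
  assumes periodic: "\<And>x. W (x + 1) = W x"
    and L1: "W absolutely_integrable_on {0..1}"
    and mean_zero: "integral {0..1} W = 0"
    and deriv1: "\<And>x. x \<notin> \<int> \<Longrightarrow> (W has_real_derivative W' x) (at x)"
    and deriv2: "\<And>x. x \<notin> \<int> \<Longrightarrow> (W' has_real_derivative W'' x) (at x)"
    and cont2: "continuous_on (- \<int>) W''"
    and even: "\<And>x. W (- x) = W x"
    and C1_pos: "C1 > 0"
    and convex: "\<And>x. x \<notin> \<int> \<Longrightarrow> W'' x \<ge> C1"
  shows "\<forall>k::int. k \<noteq> 0 \<longrightarrow> fourier_coeff W k \<in> \<real> \<and> Re (fourier_coeff W k) > 0"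
proof (intro allI impI)
  fix k :: int
  assume "k \<noteq> 0"
  define c where "c = integral {0..1} (\<lambda>x. W x * cos (2 * pi * k * x))"
  have symm: "W (1 - x) = W x" for x
    using periodic[of "- x"] even[of x] by simp
  have coeff: "fourier_coeff W k = of_real c"
    unfolding c_def fourier_coeff_eq_cos_sin[OF L1] sin_integral_eq_0_if_symmetric[of W, OF symm] by simp
  have "x \<notin> \<int>" if "x \<in> {0<..<1}" for x :: real
    using that by (auto elim!: Ints_cases)
  then have "convex_on {0<..<1} (\<lambda>x. W x - C1 / 2 * x\<^sup>2)"
    by (intro convex_on_diff_half_square[where f' = W' and f'' = W'']) (auto intro: deriv1 deriv2 convex)
  then have "0 \<le> integral {0..1} (\<lambda>x. (W x - C1 / 2 * x\<^sup>2) * cos (2 * pi * k * x))"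
    using convex_on_cos_integral_nonneg_int \<open>k \<noteq> 0\<close> by blast
  also have "\<dots> = c - C1 / (4 * pi\<^sup>2 * k\<^sup>2)"
    unfolding c_def using L1 \<open>k \<noteq> 0\<close> by (rule cos_integral_diff_half_square)
  finally have "C1 / (4 * pi\<^sup>2 * k\<^sup>2) \<le> c" by simp
  moreover have "0 < C1 / (4 * pi\<^sup>2 * k\<^sup>2)"
    using C1_pos \<open>k \<noteq> 0\<close> by simp
  ultimately show "fourier_coeff W k \<in> \<real> \<and> Re (fourier_coeff W k) > 0"
    unfolding coeff by simp
qed

end
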